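(* Let $d\geq 2$ and $R\geq 1$ be integers and let $T_{d,R}$ be the rooted tree described below. Then the largest adjacency eigenvalue and the largest laplacian eigenvalue of $T_{d,R}$ are $$\alpha_{\max}=2\sqrt{d-1}\,\cos\frac{\pi}{R+2},\qquad \lambda_{\max}=d+2\sqrt{d-1}\,\cos\frac{\pi}{R+1}.$$
   Context: $T_{d,R}$ is the finite tree with a root vertex of degree $d-1$, all of whose pendant vertices (leaves) lie at distance exactly $R$ from the root, and all of whose remaining (intermediate) vertices have degree $d$. The adjacency eigenvalues are the eigenvalues of the adjacency matrix $A$; the laplacian eigenvalues are the eigenvalues of $L=\mathrm{diag}(\deg)-A$. *)

theory Defs
  imports "Jordan_Normal_Form.Char_Poly" Complex_Main
begin

text \<open>The tree T_{d,R}: root of degree d-1, every intermediate vertex of degree d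
  (i.e. d-1 children), all leaves at depth R.  Vertices are numbered 0..n-1 in breadth-first (heap) order with
  m = d-1 children per internal vertex: the root is 0, the parent of vertex j > 0 is
  (j - 1) div m, and the children of i are m*i+1, ..., m*i+m.\<close>

definition tree_size :: "nat \<Rightarrow> nat \<Rightarrow> nat" where
  "tree_size d R = (\<Sum>k\<le>R. (d - 1) ^ k)"

definition tree_adj :: "nat \<Rightarrow> nat \<Rightarrow> nat \<Rightarrow> bool" where
  "tree_adj d i j \<longleftrightarrow> (0 < j \<and> i = (j - 1) div (d - 1)) \<or> (0 < i \<and> j = (i - 1) div (d - 1))"

definition tree_adj_mat :: "nat \<Rightarrow> nat \<Rightarrow> real mat" where
  "tree_adj_mat d R = mat (tree_size d R) (tree_size d R)
     (\<lambda>(i, j). if tree_adj d i j then 1 else 0)"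

definition tree_deg :: "nat \<Rightarrow> nat \<Rightarrow> nat \<Rightarrow> nat" where
  "tree_deg d R i = card {j. j < tree_size d R \<and> tree_adj d i j}"

definition tree_lap_mat :: "nat \<Rightarrow> nat \<Rightarrow> real mat" where
  "tree_lap_mat d R = mat (tree_size d R) (tree_size d R)
     (\<lambda>(i, j). (if i = j then real (tree_deg d R i) else 0) - (if tree_adj d i j then 1 else 0))"

end

theory Submission
  imports Defs
begin

text \<open>Both matrices have a positive test vector that only depends on the depth, on which they act
  like a weighted path: the adjacency matrix by f(k-1) + (d-1) f(k+1), so that
  f(k) = sin((k+1)\<pi>/(R+2)) / (d-1)^(k/2) is an eigenvector for 2 sqrt(d-1) cos(\<pi>/(R+2)).
  A positive vector u with A u = \<mu> u bounds every real eigenvalue by \<mu>: evaluate an eigenvector v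
  at the vertex maximising |v_i|/u_i.  The tree is bipartite, so the laplacian D - A is conjugate,
  by the signs (-1)^depth, to the signless laplacian D + A, to which the same argument applies.\<close>

section \<open>Positive vectors bound the real spectrum\<close>

lemma finite_eigenvalues:
  fixes A :: "real mat"
  assumes "A \<in> carrier_mat n n"
  shows "finite {a. eigenvalue A a}"
proof -
  have "char_poly A \<noteq> 0"
    using degree_monic_char_poly[OF assms] by auto
  then have "finite {a. poly (char_poly A) a = 0}"
    by (rule poly_roots_finite)
  then show ?thesis
    using eigenvalue_root_char_poly[OF assms] by simp
qed

lemma eigenvalue_le_of_positive_vector:
  fixes A :: "real mat" and u :: "nat \<Rightarrow> real"
  assumes A: "A \<in> carrier_mat n n" and a: "eigenvalue A a"
    and u_pos: "\<And>i. i < n \<Longrightarrow> 0 < u i"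
    and dominant: "\<And>i. i < n \<Longrightarrow>
      A $$ (i, i) * u i + (\<Sum>j\<in>{..<n} - {i}. \<bar>A $$ (i, j)\<bar> * u j) \<le> \<mu> * u i"
  shows "a \<le> \<mu>"
proof -
  obtain v where v: "v \<in> carrier_vec n" "v \<noteq> 0\<^sub>v n" "A *\<^sub>v v = a \<cdot>\<^sub>v v"
    using a A unfolding eigenvalue_def eigenvector_def by auto
  obtain k where k: "k < n" "v $ k \<noteq> 0"
    using v(1,2) by (metis carrier_vecD eq_vecI index_zero_vec(1,2))
  define r where "r j = \<bar>v $ j\<bar> / u j" for j
  have "Max (r ` {..<n}) \<in> r ` {..<n}"
    using k(1) by (intro Max_in) auto
  then obtain i where i: "i < n" "r i = Max (r ` {..<n})"
    by auto
  have r_max: "r j \<le> r i" if "j < n" for j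
    using that i(2) by simp
  have v_le: "\<bar>v $ j\<bar> \<le> r i * u j" if "j < n" for j
    using r_max[OF that] u_pos[OF that] unfolding r_def by (simp add: divide_le_eq)
  have "0 < r k"
    using k u_pos[OF k(1)] unfolding r_def by simp
  then have vi_pos: "0 < r i * u i"
    using r_max[OF k(1)] u_pos[OF i(1)] by simp
  have vi: "\<bar>v $ i\<bar> = r i * u i"
    using u_pos[OF i(1)] unfolding r_def by simp
  have "a * v $ i = (\<Sum>j<n. A $$ (i, j) * v $ j)"
    using arg_cong[OF v(3), of "\<lambda>w. w $ i"] A v(1) i(1)
    by (simp add: scalar_prod_def atLeast0LessThan)
  also have "\<dots> = A $$ (i, i) * v $ i + (\<Sum>j\<in>{..<n} - {i}. A $$ (i, j) * v $ j)"
    using i(1) by (simp add: sum.remove)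
  finally have row: "(a - A $$ (i, i)) * v $ i = (\<Sum>j\<in>{..<n} - {i}. A $$ (i, j) * v $ j)"
    by (simp add: algebra_simps)
  have "(a - A $$ (i, i)) * (r i * u i) \<le> \<bar>(a - A $$ (i, i)) * v $ i\<bar>"
    unfolding vi[symmetric] abs_mult by (simp add: mult_right_mono)
  also have "\<dots> \<le> (\<Sum>j\<in>{..<n} - {i}. \<bar>A $$ (i, j)\<bar> * \<bar>v $ j\<bar>)"
    unfolding row by (rule order_trans[OF sum_abs]) (simp add: abs_mult)
  also have "\<dots> \<le> (\<Sum>j\<in>{..<n} - {i}. \<bar>A $$ (i, j)\<bar> * (r i * u j))"
    by (intro sum_mono mult_left_mono v_le) auto
  also have "\<dots> = r i * (\<Sum>j\<in>{..<n} - {i}. \<bar>A $$ (i, j)\<bar> * u j)"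
    by (simp add: sum_distrib_left algebra_simps)
  also have "\<dots> \<le> r i * ((\<mu> - A $$ (i, i)) * u i)"
    using dominant[OF i(1)] vi_pos u_pos[OF i(1)]
    by (intro mult_left_mono) (auto simp: algebra_simps zero_less_mult_iff)
  finally have "(a - A $$ (i, i)) * (r i * u i) \<le> (\<mu> - A $$ (i, i)) * (r i * u i)"
    by (simp add: algebra_simps)
  then show ?thesis
    using vi_pos by (simp add: mult_le_cancel_right_pos)
qed

lemma Max_eigenvalues_eqI:
  fixes A :: "real mat" and u :: "nat \<Rightarrow> real"
  assumes A: "A \<in> carrier_mat n n" and "eigenvalue A \<mu>"
    and "\<And>i. i < n \<Longrightarrow> 0 < u i"
    and "\<And>i. i < n \<Longrightarrow>
      A $$ (i, i) * u i + (\<Sum>j\<in>{..<n} - {i}. \<bar>A $$ (i, j)\<bar> * u j) \<le> \<mu> * u i"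
  shows "Max {a. eigenvalue A a} = \<mu>"
  using assms eigenvalue_le_of_positive_vector[OF A, of _ u \<mu>]
  by (intro Max_eqI finite_eigenvalues[OF A]) auto


lemma eigenvalue_vecI:
  fixes A :: "'a :: field mat"
  assumes A: "A \<in> carrier_mat n n"
    and eq: "\<And>i. i < n \<Longrightarrow> (A *\<^sub>v vec n f) $ i = \<mu> * f i"
    and k: "k < n" "f k \<noteq> 0"
  shows "eigenvalue A \<mu>"
proof -
  have "A *\<^sub>v vec n f = \<mu> \<cdot>\<^sub>v vec n f"
    using A eq by (intro eq_vecI) auto
  moreover have "vec n f \<noteq> 0\<^sub>v n"
    using k by (metis index_vec index_zero_vec(1))
  ultimately show ?thesis
    using A unfolding eigenvalue_def eigenvector_def by (intro exI[of _ "vec n f"]) auto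
qed

section \<open>Radial eigenvectors\<close>

definition scaled_sin :: "real \<Rightarrow> real \<Rightarrow> nat \<Rightarrow> real" where
  "scaled_sin s t k = sin (real k * t) / s ^ k"

lemma scaled_sin_0 [simp]: "scaled_sin s t 0 = 0"
  by (simp add: scaled_sin_def)

lemma scaled_sin_rec:
  assumes "s \<noteq> 0"
  shows "scaled_sin s t k + s\<^sup>2 * scaled_sin s t (k + 2) = 2 * s * cos t * scaled_sin s t (k + 1)"
proof -
  have "sin (real k * t) + sin (real (k + 2) * t) = 2 * cos t * sin (real (k + 1) * t)"
    using sin_add[of "real (k + 1) * t" t] sin_diff[of "real (k + 1) * t" t]
    by (simp add: algebra_simps)
  then show ?thesis
    using assms unfolding scaled_sin_def by (simp add: field_simps power2_eq_square)
qed

lemma scaled_sin_root: "scaled_sin s (pi / real N) N = 0"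
  by (cases "N = 0") (simp_all add: scaled_sin_def)

lemma scaled_sin_pos:
  assumes "0 < s" "0 < k" "k < N"
  shows "0 < scaled_sin s (pi / real N) k"
proof -
  have "real k * (pi / real N) < pi" "0 < real k * (pi / real N)"
    using assms by (simp_all add: field_simps)
  then show ?thesis
    using assms(1) unfolding scaled_sin_def by (simp add: sin_gt_zero)
qed

lemma scaled_sin_nonneg:
  assumes "0 < s" "k \<le> N"
  shows "0 \<le> scaled_sin s (pi / real N) k"
proof -
  have "pi * real k \<le> pi * real N"
    using assms(2) by (simp add: mult_left_mono)
  then have "real k * (pi / real N) \<le> pi" "0 \<le> real k * (pi / real N)"
    by (cases "N = 0"; simp add: field_simps)+
  then show ?thesis
    using assms(1) unfolding scaled_sin_def by (simp add: sin_ge_zero)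
qed

text \<open>Adjacency and degree of T_{d,R} seen on functions of the depth, with q = d - 1: a vertex at
  depth k has its parent at depth k - 1 and q children at depth k + 1.\<close>

definition level_adj :: "real \<Rightarrow> nat \<Rightarrow> (nat \<Rightarrow> real) \<Rightarrow> nat \<Rightarrow> real" where
  "level_adj q R F k = (if 0 < k then F (k - 1) else 0) + (if k < R then q * F (Suc k) else 0)"

definition level_deg :: "real \<Rightarrow> nat \<Rightarrow> nat \<Rightarrow> real" where
  "level_deg q R k = (if 0 < k then 1 else 0) + (if k < R then q else 0)"

lemma level_adj_alternating:
  "level_adj q R (\<lambda>k. (-1) ^ k * F k) k = - ((-1) ^ k * level_adj q R F k)"
  unfolding level_adj_def by (cases k) (auto simp: algebra_simps)

lemma level_adj_shift_eq:
  fixes F :: "nat \<Rightarrow> real"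
  assumes rec: "\<And>k. F k + q * F (k + 2) = M * F (k + 1)"
    and "F 0 = 0" "F (R + 2) = 0" "k \<le> R"
  shows "level_adj q R (\<lambda>k. F (Suc k)) k = M * F (Suc k)"
  using rec[of k] assms(2-4) unfolding level_adj_def add_2_eq_Suc'
  by (cases k; cases "k = R") auto

lemma level_signless_laplacian_eq:
  fixes F g :: "nat \<Rightarrow> real"
  assumes rec: "\<And>k. F k + q * F (k + 2) = M * F (k + 1)"
    and F0: "F 0 = 0" and FR: "F (Suc R) = 0" and k: "k \<le> R"
    and g: "\<And>k. g k = F k + q * F (Suc k)"
  shows "level_deg q R k * g k + level_adj q R g k = (q + 1 + M) * g k"
proof -
  have g_rec: "g j + q * g (j + 2) = M * g (j + 1)" for j
  proof -
    have "g j + q * g (j + 2) = (F j + q * F (j + 2)) + q * (F (j + 1) + q * F (j + 3))"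
      unfolding g by (simp add: algebra_simps numeral_eq_Suc)
    also have "\<dots> = M * g (j + 1)"
      unfolding rec g using rec[of "j + 1"] by (simp add: algebra_simps numeral_eq_Suc)
    finally show ?thesis .
  qed
  consider "k = 0" "R = 0" | "k = 0" "0 < R" | "0 < k" "k < R" | "0 < k" "k = R"
    using k by linarith
  then show ?thesis
  proof cases
    case 1
    then show ?thesis
      using FR F0 g[of 0] by (simp add: level_deg_def level_adj_def)
  next
    case 2
    have "q * g 1 = (1 + M) * g 0"
      using rec[of 0] F0 g[of 0] g[of 1] by (simp add: algebra_simps)
    then show ?thesis
      using 2 by (simp add: level_deg_def level_adj_def algebra_simps)
  next
    case 3
    then show ?thesis
      using g_rec[of "k - 1"] by (simp add: level_deg_def level_adj_def algebra_simps)
  next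
    case 4
    have "g (k - 1) = (q + M) * g k"
      using rec[of "k - 1"] FR g[of k] g[of "k - 1"] 4 by (simp add: algebra_simps)
    then show ?thesis
      using 4 by (simp add: level_deg_def level_adj_def algebra_simps)
  qed
qed

section \<open>The tree in heap order\<close>

function heap_depth :: "nat \<Rightarrow> nat \<Rightarrow> nat" where
  "heap_depth m i = (if i = 0 then 0 else Suc (heap_depth m ((i - 1) div m)))"
  by pat_completeness auto
termination
  by (relation "measure snd") (auto intro: le_less_trans[OF div_le_dividend])

declare heap_depth.simps [simp del]

lemma heap_depth_0 [simp]: "heap_depth m 0 = 0"
  by (simp add: heap_depth.simps)

lemma heap_depth_pos: "0 < i \<Longrightarrow> heap_depth m i = Suc (heap_depth m ((i - 1) div m))"
  by (simp add: heap_depth.simps)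

lemma heap_depth_gt_0_iff [simp]: "0 < heap_depth m i \<longleftrightarrow> 0 < i"
  by (cases "i = 0") (simp_all add: heap_depth_pos)

definition heap_size :: "nat \<Rightarrow> nat \<Rightarrow> nat" where
  "heap_size m k = (\<Sum>j<k. m ^ j)"

lemma heap_size_Suc: "heap_size m (Suc k) = m * heap_size m k + 1"
  unfolding heap_size_def by (subst sum.lessThan_Suc_shift) (simp add: sum_distrib_left)

lemma strict_mono_heap_size: "1 \<le> m \<Longrightarrow> strict_mono (heap_size m)"
  by (simp add: strict_mono_Suc_iff heap_size_def)

lemma tree_size_eq_heap_size: "tree_size (Suc m) R = heap_size m (Suc R)"
  unfolding tree_size_def heap_size_def by (simp add: lessThan_Suc_atMost)

lemma tree_size_pos: "0 < tree_size d R"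
  unfolding tree_size_def by (simp add: sum_pos2[of _ 0])

lemma child_range_iff:
  fixes i j m :: nat
  assumes "1 \<le> m"
  shows "0 < j \<and> (j - 1) div m = i \<longleftrightarrow> m * i + 1 \<le> j \<and> j \<le> m * i + m"
proof
  assume j: "0 < j \<and> (j - 1) div m = i"
  then have "m * i + (j - 1) mod m = j - 1"
    using mult_div_mod_eq[of m "j - 1"] by simp
  moreover have "(j - 1) mod m < m"
    using assms by simp
  ultimately show "m * i + 1 \<le> j \<and> j \<le> m * i + m"
    using j by linarith
next
  assume "m * i + 1 \<le> j \<and> j \<le> m * i + m"
  then show "0 < j \<and> (j - 1) div m = i"
    by (auto intro: div_nat_eqI)
qed

lemma heap_depth_bounds:
  assumes "1 \<le> m"
  shows "heap_size m (heap_depth m i) \<le> i \<and> i < heap_size m (Suc (heap_depth m i))"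
proof (induction i rule: less_induct)
  case (less i)
  show ?case
  proof (cases "i = 0")
    case True
    then show ?thesis by (simp add: heap_size_def)
  next
    case False
    define p where "p = (i - 1) div m"
    have "p < i"
      using False unfolding p_def by (simp add: le_less_trans[OF div_le_dividend])
    with less have IH: "heap_size m (heap_depth m p) \<le> p" "p < heap_size m (Suc (heap_depth m p))"
      by auto
    have depth: "heap_depth m i = Suc (heap_depth m p)"
      using False by (simp add: heap_depth_pos p_def)
    have child: "m * p + 1 \<le> i" "i \<le> m * p + m"
      using child_range_iff[OF assms, of i p] False unfolding p_def by auto
    define h where "h = heap_size m (heap_depth m p)"
    have "h \<le> p" "p \<le> m * h"
      using IH unfolding h_def heap_size_Suc by simp_all
    then have "m * h \<le> m * p" "m * p \<le> m * (m * h)"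
      by simp_all
    moreover have "m * (m * h + 1) = m * (m * h) + m"
      by (simp add: distrib_left)
    ultimately show ?thesis
      unfolding depth heap_size_Suc h_def[symmetric] using child by linarith
  qed
qed

lemma less_heap_size_Suc_iff:
  assumes "1 \<le> m"
  shows "i < heap_size m (Suc R) \<longleftrightarrow> heap_depth m i \<le> R"
proof -
  have bounds: "heap_size m (heap_depth m i) \<le> i" "i < heap_size m (Suc (heap_depth m i))"
    using heap_depth_bounds[OF assms] by auto
  have mono: "heap_size m k \<le> heap_size m l \<longleftrightarrow> k \<le> l" for k l
    using strict_mono_less_eq[OF strict_mono_heap_size[OF assms]] .
  show ?thesis
  proof
    assume "i < heap_size m (Suc R)"
    with bounds(1) have "\<not> heap_size m (Suc R) \<le> heap_size m (heap_depth m i)"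
      by linarith
    then show "heap_depth m i \<le> R"
      unfolding mono by simp
  next
    assume "heap_depth m i \<le> R"
    then have "heap_size m (Suc (heap_depth m i)) \<le> heap_size m (Suc R)"
      unfolding mono by simp
    with bounds(2) show "i < heap_size m (Suc R)"
      by linarith
  qed
qed

lemma heap_depth_child:
  assumes "1 \<le> m" "m * i + 1 \<le> j" "j \<le> m * i + m"
  shows "heap_depth m j = Suc (heap_depth m i)"
  using child_range_iff[OF assms(1), of j i] assms by (simp add: heap_depth_pos)

lemma tree_adj_iff:
  assumes "1 \<le> m"
  shows "tree_adj (Suc m) i j \<longleftrightarrow> (0 < i \<and> j = (i - 1) div m) \<or> (m * i + 1 \<le> j \<and> j \<le> m * i + m)"
  unfolding tree_adj_def using child_range_iff[OF assms, of j i] by auto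

lemma tree_adj_irrefl:
  assumes "1 \<le> m"
  shows "\<not> tree_adj (Suc m) i i"
proof -
  have "(i - 1) div m < i" if "0 < i"
    using that div_le_dividend[of "i - 1" m] by linarith
  moreover have "i \<le> m * i"
    using assms by simp
  ultimately show ?thesis
    unfolding tree_adj_iff[OF assms] by (metis not_less_eq_eq less_irrefl Suc_eq_plus1)
qed

lemma tree_neighbours:
  assumes m: "1 \<le> m" and i: "i < heap_size m (Suc R)"
  shows "{j. j < heap_size m (Suc R) \<and> tree_adj (Suc m) i j} =
     (if 0 < i then {(i - 1) div m} else {}) \<union> (if heap_depth m i < R then {m * i + 1..m * i + m} else {})"
proof -
  have "(i - 1) div m < heap_size m (Suc R)"
    using i div_le_dividend[of "i - 1" m] by linarith
  moreover have "j < heap_size m (Suc R) \<longleftrightarrow> heap_depth m i < R" if "m * i + 1 \<le> j" "j \<le> m * i + m" for j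
    using less_heap_size_Suc_iff[OF m] heap_depth_child[OF m that] by (simp add: Suc_le_eq)
  ultimately show ?thesis
    by (auto simp: tree_adj_iff[OF m] Suc_le_eq)
qed

lemma sum_tree_neighbours:
  fixes w :: "nat \<Rightarrow> real"
  assumes m: "1 \<le> m" and i: "i < heap_size m (Suc R)"
  shows "(\<Sum>j<heap_size m (Suc R). if tree_adj (Suc m) i j then w j else 0) =
     (if 0 < i then w ((i - 1) div m) else 0)
     + (if heap_depth m i < R then (\<Sum>j\<in>{m * i + 1..m * i + m}. w j) else 0)"
proof -
  have "(i - 1) div m \<le> i" "i \<le> m * i"
    using m le_trans[OF div_le_dividend diff_le_self] by simp_all
  then have parent_not_child: "(i - 1) div m \<notin> {m * i + 1..m * i + m}"
    unfolding atLeastAtMost_iff by linarith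
  have "(\<Sum>j<heap_size m (Suc R). if tree_adj (Suc m) i j then w j else 0) =
      sum w {j. j < heap_size m (Suc R) \<and> tree_adj (Suc m) i j}"
    using sum.inter_filter[of "{..<heap_size m (Suc R)}" w "tree_adj (Suc m) i"] by simp
  also have "\<dots> = (if 0 < i then w ((i - 1) div m) else 0)
     + (if heap_depth m i < R then (\<Sum>j\<in>{m * i + 1..m * i + m}. w j) else 0)"
    unfolding tree_neighbours[OF m i] using parent_not_child
    by (subst sum.union_disjoint) auto
  finally show ?thesis .
qed

lemma sum_tree_neighbours_radial:
  fixes F :: "nat \<Rightarrow> real"
  assumes m: "1 \<le> m" and i: "i < heap_size m (Suc R)"
  shows "(\<Sum>j<heap_size m (Suc R). if tree_adj (Suc m) i j then F (heap_depth m j) else 0) =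
     level_adj (real m) R F (heap_depth m i)"
proof -
  have "(\<Sum>j\<in>{m * i + 1..m * i + m}. F (heap_depth m j)) =
      (\<Sum>j\<in>{m * i + 1..m * i + m}. F (Suc (heap_depth m i)))"
  proof (rule sum.cong)
    fix j assume "j \<in> {m * i + 1..m * i + m}"
    then show "F (heap_depth m j) = F (Suc (heap_depth m i))"
      using heap_depth_child[OF m, of i j] by simp
  qed simp
  moreover have "heap_depth m ((i - 1) div m) = heap_depth m i - 1" if "0 < i"
    using heap_depth_pos[OF that, of m] by simp
  ultimately show ?thesis
    unfolding sum_tree_neighbours[OF m i] level_adj_def by simp
qed

lemma real_tree_deg:
  assumes m: "1 \<le> m" and i: "i < tree_size (Suc m) R"
  shows "real (tree_deg (Suc m) R i) = level_deg (real m) R (heap_depth m i)"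
proof -
  have "real (tree_deg (Suc m) R i) = (\<Sum>j<heap_size m (Suc R). if tree_adj (Suc m) i j then 1 else 0)"
    using sum.inter_filter[of "{..<heap_size m (Suc R)}" "\<lambda>_. 1 :: real" "tree_adj (Suc m) i"]
    unfolding tree_deg_def tree_size_eq_heap_size card_eq_sum by simp
  then show ?thesis
    using sum_tree_neighbours_radial[OF m, of i R "\<lambda>_. 1"] i
    unfolding tree_size_eq_heap_size level_adj_def level_deg_def by simp
qed

lemma heap_depth_le_of_tree:
  assumes "1 \<le> m" "i < tree_size (Suc m) R"
  shows "heap_depth m i \<le> R"
  using assms less_heap_size_Suc_iff by (simp add: tree_size_eq_heap_size)

lemma tree_adj_mat_mult_vec_nth:
  assumes "i < tree_size d R"
  shows "(tree_adj_mat d R *\<^sub>v vec (tree_size d R) f) $ i =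
    (\<Sum>j<tree_size d R. if tree_adj d i j then f j else 0)"
  using assms by (auto simp: tree_adj_mat_def scalar_prod_def atLeast0LessThan intro: sum.cong)

lemma tree_lap_mat_mult_vec_nth:
  assumes "i < tree_size d R"
  shows "(tree_lap_mat d R *\<^sub>v vec (tree_size d R) f) $ i =
    real (tree_deg d R i) * f i - (\<Sum>j<tree_size d R. if tree_adj d i j then f j else 0)"
proof -
  have "(tree_lap_mat d R *\<^sub>v vec (tree_size d R) f) $ i = (\<Sum>j<tree_size d R.
      (if i = j then real (tree_deg d R i) * f j else 0) - (if tree_adj d i j then f j else 0))"
    using assms by (auto simp: tree_lap_mat_def scalar_prod_def atLeast0LessThan left_diff_distrib
        intro: sum.cong)
  then show ?thesis
    using assms by (simp add: sum_subtractf)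
qed

lemma tree_mat_off_diagonal_sum:
  fixes A :: "real mat" and u :: "nat \<Rightarrow> real"
  assumes m: "1 \<le> m" and i: "i < tree_size (Suc m) R"
    and A: "\<And>j. j < tree_size (Suc m) R \<Longrightarrow> j \<noteq> i \<Longrightarrow> \<bar>A $$ (i, j)\<bar> = (if tree_adj (Suc m) i j then 1 else 0)"
  shows "(\<Sum>j\<in>{..<tree_size (Suc m) R} - {i}. \<bar>A $$ (i, j)\<bar> * u j) =
    (\<Sum>j<tree_size (Suc m) R. if tree_adj (Suc m) i j then u j else 0)"
proof -
  have "(\<Sum>j\<in>{..<tree_size (Suc m) R} - {i}. \<bar>A $$ (i, j)\<bar> * u j) =
      (\<Sum>j\<in>{..<tree_size (Suc m) R} - {i}. if tree_adj (Suc m) i j then u j else 0)"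
    using A by (intro sum.cong) auto
  also have "\<dots> = (\<Sum>j<tree_size (Suc m) R. if tree_adj (Suc m) i j then u j else 0)"
    using i tree_adj_irrefl[OF m, of i] by (simp add: sum_diff1)
  finally show ?thesis .
qed


lemma tree_adj_mat_mult_radial:
  assumes m: "1 \<le> m" and i: "i < tree_size (Suc m) R"
  shows "(tree_adj_mat (Suc m) R *\<^sub>v vec (tree_size (Suc m) R) (\<lambda>j. F (heap_depth m j))) $ i =
    level_adj (real m) R F (heap_depth m i)"
  using tree_adj_mat_mult_vec_nth[OF i] sum_tree_neighbours_radial[OF m] i
  by (simp add: tree_size_eq_heap_size)

lemma tree_lap_mat_mult_alternating:
  assumes m: "1 \<le> m" and i: "i < tree_size (Suc m) R"
  shows "(tree_lap_mat (Suc m) R *\<^sub>v vec (tree_size (Suc m) R) (\<lambda>j. (-1) ^ heap_depth m j * F (heap_depth m j))) $ i =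
    (-1) ^ heap_depth m i * (level_deg (real m) R (heap_depth m i) * F (heap_depth m i)
      + level_adj (real m) R F (heap_depth m i))"
proof -
  have "(\<Sum>j<tree_size (Suc m) R. if tree_adj (Suc m) i j then (-1) ^ heap_depth m j * F (heap_depth m j) else 0)
      = - ((-1) ^ heap_depth m i * level_adj (real m) R F (heap_depth m i))"
    using sum_tree_neighbours_radial[OF m, of i R "\<lambda>k. (-1) ^ k * F k"] i
    unfolding tree_size_eq_heap_size level_adj_alternating by simp
  then show ?thesis
    unfolding tree_lap_mat_mult_vec_nth[OF i] real_tree_deg[OF m i] by (simp add: algebra_simps)
qed

lemma tree_adj_mat_row_sum:
  assumes m: "1 \<le> m" and i: "i < tree_size (Suc m) R"
  shows "tree_adj_mat (Suc m) R $$ (i, i) * F (heap_depth m i)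
      + (\<Sum>j\<in>{..<tree_size (Suc m) R} - {i}. \<bar>tree_adj_mat (Suc m) R $$ (i, j)\<bar> * F (heap_depth m j))
    = level_adj (real m) R F (heap_depth m i)"
  using tree_mat_off_diagonal_sum[OF m i, of "tree_adj_mat (Suc m) R"] tree_adj_irrefl[OF m, of i]
    sum_tree_neighbours_radial[OF m, of i R F] i
  by (simp add: tree_adj_mat_def tree_size_eq_heap_size)

lemma tree_lap_mat_row_sum:
  assumes m: "1 \<le> m" and i: "i < tree_size (Suc m) R"
  shows "tree_lap_mat (Suc m) R $$ (i, i) * F (heap_depth m i)
      + (\<Sum>j\<in>{..<tree_size (Suc m) R} - {i}. \<bar>tree_lap_mat (Suc m) R $$ (i, j)\<bar> * F (heap_depth m j))
    = level_deg (real m) R (heap_depth m i) * F (heap_depth m i) + level_adj (real m) R F (heap_depth m i)"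
  using tree_mat_off_diagonal_sum[OF m i, of "tree_lap_mat (Suc m) R"] tree_adj_irrefl[OF m, of i]
    sum_tree_neighbours_radial[OF m, of i R F] real_tree_deg[OF m i] i
  by (simp add: tree_lap_mat_def tree_size_eq_heap_size)

section \<open>The spectra of the tree\<close>

lemma Max_eigenvalue_tree_adj_mat:
  assumes m: "1 \<le> m"
  shows "Max {a. eigenvalue (tree_adj_mat (Suc m) R) a} = 2 * sqrt (real m) * cos (pi / (real R + 2))"
proof -
  define n where "n = tree_size (Suc m) R"
  define s where "s = sqrt (real m)"
  define \<mu> where "\<mu> = 2 * s * cos (pi / real (R + 2))"
  define F where "F = scaled_sin s (pi / real (R + 2))"
  define f where "f k = F (Suc k)" for k
  have s: "0 < s" "s\<^sup>2 = real m"
    using m by (simp_all add: s_def)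
  have A: "tree_adj_mat (Suc m) R \<in> carrier_mat n n"
    by (simp add: tree_adj_mat_def n_def)
  have depth: "heap_depth m i \<le> R" if "i < n" for i
    using heap_depth_le_of_tree[OF m] that by (simp add: n_def)
  have f_pos: "0 < f k" if "k \<le> R" for k
    using scaled_sin_pos[OF s(1), of "Suc k" "R + 2"] that unfolding f_def F_def by simp
  have f_eq: "level_adj (real m) R f k = \<mu> * f k" if "k \<le> R" for k
    using level_adj_shift_eq[of F "real m" \<mu> R k] scaled_sin_rec[of s] scaled_sin_root[of s "R + 2"]
      that s unfolding f_def F_def \<mu>_def by simp
  have "eigenvalue (tree_adj_mat (Suc m) R) \<mu>"
    using tree_adj_mat_mult_radial[OF m, of _ R f] f_eq depth f_pos[of 0] tree_size_pos[of "Suc m" R]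
    by (intro eigenvalue_vecI[OF A, of "\<lambda>j. f (heap_depth m j)" \<mu> 0]) (auto simp: n_def)
  then have "Max {a. eigenvalue (tree_adj_mat (Suc m) R) a} = \<mu>"
    using tree_adj_mat_row_sum[OF m, of _ R f] f_eq depth f_pos
    by (intro Max_eigenvalues_eqI[OF A, of \<mu> "\<lambda>j. f (heap_depth m j)"]) (auto simp: n_def)
  then show ?thesis
    by (simp add: \<mu>_def s_def add.commute)
qed

lemma Max_eigenvalue_tree_lap_mat:
  assumes m: "1 \<le> m" and R: "1 \<le> R"
  shows "Max {l. eigenvalue (tree_lap_mat (Suc m) R) l} = real (Suc m) + 2 * sqrt (real m) * cos (pi / (real R + 1))"
proof -
  define n where "n = tree_size (Suc m) R"
  define s where "s = sqrt (real m)"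
  define \<nu> where "\<nu> = real m + 1 + 2 * s * cos (pi / real (R + 1))"
  define F where "F = scaled_sin s (pi / real (R + 1))"
  define g where "g k = F k + real m * F (Suc k)" for k
  have s: "0 < s" "s\<^sup>2 = real m"
    using m by (simp_all add: s_def)
  have A: "tree_lap_mat (Suc m) R \<in> carrier_mat n n"
    by (simp add: tree_lap_mat_def n_def)
  have depth: "heap_depth m i \<le> R" if "i < n" for i
    using heap_depth_le_of_tree[OF m] that by (simp add: n_def)
  have g_pos: "0 < g k" if "k \<le> R" for k
  proof -
    have "0 \<le> F k" "0 \<le> F (Suc k)" "0 < F k \<or> 0 < F (Suc k)"
      using that R scaled_sin_nonneg[OF s(1), of _ "R + 1"] scaled_sin_pos[OF s(1), of _ "R + 1"]
      unfolding F_def by (cases "k = 0"; simp)+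
    then show ?thesis
      using m unfolding g_def by (auto intro: add_pos_nonneg add_nonneg_pos)
  qed
  have g_eq: "level_deg (real m) R k * g k + level_adj (real m) R g k = \<nu> * g k" if "k \<le> R" for k
    using level_signless_laplacian_eq[of F "real m" "2 * s * cos (pi / real (R + 1))" R k g]
      scaled_sin_rec[of s] scaled_sin_root[of s "R + 1"] that s g_def
    unfolding F_def \<nu>_def by simp
  have "eigenvalue (tree_lap_mat (Suc m) R) \<nu>"
    using tree_lap_mat_mult_alternating[OF m, of _ R g] g_eq depth g_pos[of 0] tree_size_pos[of "Suc m" R]
    by (intro eigenvalue_vecI[OF A, of "\<lambda>j. (-1) ^ heap_depth m j * g (heap_depth m j)" \<nu> 0])
      (auto simp: n_def)
  then have "Max {l. eigenvalue (tree_lap_mat (Suc m) R) l} = \<nu>"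
    using tree_lap_mat_row_sum[OF m, of _ R g] g_eq depth g_pos
    by (intro Max_eigenvalues_eqI[OF A, of \<nu> "\<lambda>j. g (heap_depth m j)"]) (auto simp: n_def)
  then show ?thesis
    by (simp add: \<nu>_def s_def add.commute)
qed

theorem mainTheorem19:
  fixes d R :: nat
  assumes "d \<ge> 2" and "R \<ge> 1"
  shows "Max {a. eigenvalue (tree_adj_mat d R) a} = 2 * sqrt (real d - 1) * cos (pi / (real R + 2))
       \<and> Max {l. eigenvalue (tree_lap_mat d R) l} = real d + 2 * sqrt (real d - 1) * cos (pi / (real R + 1))"
proof -
  obtain m where d: "d = Suc m" and m: "1 \<le> m"
    using assms(1) by (cases d) auto
  then have "real d - 1 = real m"
    by simp
  then show ?thesis
    using Max_eigenvalue_tree_adj_mat[OF m, of R] Max_eigenvalue_tree_lap_mat[OF m assms(2)]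
    unfolding d by simp
qed

end
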